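(* Let $k$ be a field, $A_0\subseteq\mathrm{M}_n(k)$ a $d$-dimensional $k$-subalgebra, and $R=k[\epsilon]/(\epsilon^2)$. Let $\mathrm{Def}_{A_0}(R)$ be the set of $R$-subalgebras $A\subseteq\mathrm{M}_n(R)$ such that $A$ and $\mathrm{M}_n(R)/A$ are free $R$-modules, $\mathrm{rank}_R A=d$, and the image of $A$ under reduction $\mathrm{M}_n(R)\to\mathrm{M}_n(k)$ modulo $\epsilon$ is $A_0$ (i.e. $A\otimes_R k=A_0$ inside $\mathrm{M}_n(k)$). Let $G(R)=\{P\in\mathrm{PGL}_n(R)\mid P\equiv [I_n]\bmod \epsilon\}$, acting on $\mathrm{Def}_{A_0}(R)$ by $(A,P)\mapsto P^{-1}AP$. Then there is a bijection $H^1(A_0,\mathrm{M}_n(k)/A_0)\cong \mathrm{Def}_{A_0}(R)/G(R)$.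
   Context: $H^1$ is Hochschild cohomology, with $\mathrm{M}_n(k)/A_0$ an $A_0$-bimodule via matrix multiplication. $\mathrm{PGL}_n(R)=\mathrm{GL}_n(R)/(R^\times I_n)$ for the local ring $R$, and $[I_n]$ is the class of the identity. *)

theory Defs
  imports "HOL-Analysis.Analysis"
begin

(* Matrices over k: type 'k^'n^'n (n = CARD('n)).  Matrices over R = k[eps]/(eps^2):
   pairs (X,Y) standing for X + eps*Y.  Elements of R: pairs (a,b) = a + eps*b. *)

type_synonym ('k,'n) kmat = "'k^'n^'n"
type_synonym ('k,'n) rmat = "('k,'n) kmat \<times> ('k,'n) kmat"
type_synonym 'k rel_ring = "'k \<times> 'k"

definition ksc :: "'k::field \<Rightarrow> ('k,'n::finite) kmat \<Rightarrow> ('k,'n) kmat" where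
  "ksc c X = (\<chi> i j. c * X$i$j)"

definition k_subalgebra :: "('k::field,'n::finite) kmat set \<Rightarrow> bool" where
  "k_subalgebra A0 \<longleftrightarrow> 0 \<in> A0 \<and> mat 1 \<in> A0 \<and>
     (\<forall>x\<in>A0. \<forall>y\<in>A0. x + y \<in> A0 \<and> x ** y \<in> A0) \<and>
     (\<forall>c. \<forall>x\<in>A0. ksc c x \<in> A0)"

definition k_dim :: "('k::field,'n::finite) kmat set \<Rightarrow> nat \<Rightarrow> bool" where
  "k_dim A0 d \<longleftrightarrow> (\<exists>b :: nat \<Rightarrow> ('k,'n) kmat. (\<forall>i<d. b i \<in> A0) \<and>
     (\<forall>x\<in>A0. \<exists>c :: nat \<Rightarrow> 'k. x = (\<Sum>i<d. ksc (c i) (b i))) \<and>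
     (\<forall>c :: nat \<Rightarrow> 'k. (\<Sum>i<d. ksc (c i) (b i)) = 0 \<longrightarrow> (\<forall>i<d. c i = 0)))"

definition cos :: "('k::field,'n::finite) kmat set \<Rightarrow> ('k,'n) kmat \<Rightarrow> ('k,'n) kmat set" where
  "cos A0 m = {x. x - m \<in> A0}"

definition quotmod :: "('k::field,'n::finite) kmat set \<Rightarrow> ('k,'n) kmat set set" where
  "quotmod A0 = range (cos A0)"

definition Der :: "('k::field,'n::finite) kmat set \<Rightarrow> (('k,'n) kmat \<Rightarrow> ('k,'n) kmat set) set" where
  "Der A0 = {D. (\<forall>a\<in>A0. D a \<in> quotmod A0) \<and> (\<forall>a. a \<notin> A0 \<longrightarrow> D a = {}) \<and>
      (\<forall>a\<in>A0. \<forall>b\<in>A0. \<forall>c. \<forall>x\<in>D a. \<forall>y\<in>D b.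
          D (ksc c a + b) = cos A0 (ksc c x + y) \<and>
          D (a ** b) = cos A0 (a ** y + x ** b))}"

definition inner_rel :: "('k::field,'n::finite) kmat set \<Rightarrow>
    ((('k,'n) kmat \<Rightarrow> ('k,'n) kmat set) \<times> (('k,'n) kmat \<Rightarrow> ('k,'n) kmat set)) set" where
  "inner_rel A0 = {(D, D'). D \<in> Der A0 \<and> D' \<in> Der A0 \<and>
      (\<exists>m. \<forall>a\<in>A0. \<forall>x\<in>D a. \<forall>y\<in>D' a. cos A0 (x - y) = cos A0 (a ** m - m ** a))}"

definition H1 :: "('k::field,'n::finite) kmat set \<Rightarrow> (('k,'n) kmat \<Rightarrow> ('k,'n) kmat set) set set" where
  "H1 A0 = Der A0 // inner_rel A0"

definition Rmul :: "'k::field rel_ring \<Rightarrow> 'k rel_ring \<Rightarrow> 'k rel_ring" where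
  "Rmul u v = (fst u * fst v, fst u * snd v + snd u * fst v)"

definition Runits :: "'k::field rel_ring set" where
  "Runits = {u. \<exists>v. Rmul u v = (1, 0)}"

definition radd :: "('k::field,'n::finite) rmat \<Rightarrow> ('k,'n::finite) rmat \<Rightarrow> ('k,'n) rmat" where
  "radd X Y = (fst X + fst Y, snd X + snd Y)"

definition rsub :: "('k::field,'n::finite) rmat \<Rightarrow> ('k,'n::finite) rmat \<Rightarrow> ('k,'n) rmat" where
  "rsub X Y = (fst X - fst Y, snd X - snd Y)"

definition rzero :: "('k::field,'n::finite) rmat" where
  "rzero = (0, 0)"

definition rone :: "('k::field,'n::finite) rmat" where
  "rone = (mat 1, 0)"

definition rmult :: "('k::field,'n::finite) rmat \<Rightarrow> ('k,'n::finite) rmat \<Rightarrow> ('k,'n) rmat" where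
  "rmult X Y = (fst X ** fst Y, fst X ** snd Y + snd X ** fst Y)"

definition rsc :: "'k::field rel_ring \<Rightarrow> ('k,'n::finite) rmat \<Rightarrow> ('k,'n) rmat" where
  "rsc u X = (ksc (fst u) (fst X), ksc (fst u) (snd X) + ksc (snd u) (fst X))"

definition rlincomb :: "nat \<Rightarrow> (nat \<Rightarrow> 'k::field rel_ring) \<Rightarrow> (nat \<Rightarrow> ('k,'n::finite) rmat) \<Rightarrow> ('k,'n) rmat" where
  "rlincomb m r b = foldr (\<lambda>i acc. radd (rsc (r i) (b i)) acc) [0..<m] rzero"

definition R_subalgebra :: "('k::field,'n::finite) rmat set \<Rightarrow> bool" where
  "R_subalgebra A \<longleftrightarrow> rzero \<in> A \<and> rone \<in> A \<and>
     (\<forall>x\<in>A. \<forall>y\<in>A. radd x y \<in> A \<and> rmult x y \<in> A) \<and>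
     (\<forall>u. \<forall>x\<in>A. rsc u x \<in> A)"

definition R_free_rank :: "('k::field,'n::finite) rmat set \<Rightarrow> nat \<Rightarrow> bool" where
  "R_free_rank A d \<longleftrightarrow> (\<exists>b. (\<forall>i<d. b i \<in> A) \<and>
     (\<forall>x\<in>A. \<exists>r. x = rlincomb d r b) \<and>
     (\<forall>r. rlincomb d r b = rzero \<longrightarrow> (\<forall>i<d. r i = (0, 0))))"

definition R_free_quotient :: "('k::field,'n::finite) rmat set \<Rightarrow> bool" where
  "R_free_quotient A \<longleftrightarrow> (\<exists>m c. (\<forall>x. \<exists>r. rsub x (rlincomb m r c) \<in> A) \<and>
     (\<forall>r. rlincomb m r c \<in> A \<longrightarrow> (\<forall>i<m. r i = (0, 0))))"

definition DefR :: "('k::field,'n::finite) kmat set \<Rightarrow> nat \<Rightarrow> ('k,'n) rmat set set" where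
  "DefR A0 d = {A. R_subalgebra A \<and> R_free_rank A d \<and> R_free_quotient A \<and> fst ` A = A0}"

definition GLR :: "('k::field,'n::finite) rmat set" where
  "GLR = {Q. \<exists>Q'. rmult Q Q' = rone \<and> rmult Q' Q = rone}"

definition rinv :: "('k::field,'n::finite) rmat \<Rightarrow> ('k,'n) rmat" where
  "rinv Q = (SOME Q'. rmult Q Q' = rone \<and> rmult Q' Q = rone)"

definition scalar_rel :: "(('k::field,'n::finite) rmat \<times> ('k,'n) rmat) set" where
  "scalar_rel = {(Q, Q'). Q \<in> GLR \<and> Q' \<in> GLR \<and> (\<exists>u\<in>Runits. Q' = rsc u Q)}"

definition PGLR :: "('k::field,'n::finite) rmat set set" where
  "PGLR = GLR // scalar_rel"

(* G(R): classes reducing to [I_n] in PGL_n(k) *)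
definition GR :: "('k::field,'n::finite) rmat set set" where
  "GR = {P \<in> PGLR. \<forall>Q\<in>P. \<exists>c. c \<noteq> 0 \<and> fst Q = ksc c (mat 1)}"

definition conjR :: "('k::field,'n::finite) rmat \<Rightarrow> ('k,'n) rmat set \<Rightarrow> ('k,'n) rmat set" where
  "conjR Q A = (\<lambda>X. rmult (rinv Q) (rmult X Q)) ` A"

definition orbit_rel :: "('k::field,'n::finite) kmat set \<Rightarrow> nat \<Rightarrow> (('k,'n) rmat set \<times> ('k,'n) rmat set) set" where
  "orbit_rel A0 d = {(A, A'). A \<in> DefR A0 d \<and> A' \<in> DefR A0 d \<and>
      (\<exists>P\<in>GR. \<exists>Q\<in>P. A' = conjR Q A)}"

end

theory Submission
  imports Defs
begin

text \<open>A deformation \<open>A \<subseteq> M\<^sub>n(k[\<epsilon>])\<close> of \<open>A\<^sub>0\<close> is determined by its fibres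
  \<open>{y | a + \<epsilon> y \<in> A}\<close> over the elements \<open>a \<in> A\<^sub>0\<close>; each fibre is a coset of \<open>A\<^sub>0\<close>, and
  closure of \<open>A\<close> under the ring operations of \<open>M\<^sub>n(k[\<epsilon>])\<close> says precisely that
  \<open>a \<mapsto> fibre(a)\<close> is a derivation \<open>A\<^sub>0 \<rightarrow> M\<^sub>n(k)/A\<^sub>0\<close>. Conversely the graph of a
  derivation is a deformation: it is free over \<open>k[\<epsilon>]\<close> on lifts of a basis of \<open>A\<^sub>0\<close>, and
  \<open>M\<^sub>n(k[\<epsilon>])\<close> modulo it is free on a complement of \<open>A\<^sub>0\<close> in \<open>M\<^sub>n(k)\<close>. Every element of
  \<open>G(R)\<close> is represented by some \<open>c I + \<epsilon> S\<close> with \<open>c \<noteq> 0\<close>, and conjugating a graph by it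
  adds the inner derivation \<open>a \<mapsto> [a, S/c]\<close>. Hence the graph map identifies orbits with
  derivations modulo inner derivations, i.e. with \<open>H\<^sup>1(A\<^sub>0, M\<^sub>n(k)/A\<^sub>0)\<close>.\<close>

section \<open>Matrices over \<open>k\<close> as a finite-dimensional vector space\<close>

lemma ksc_add_right: "ksc c (X + Y) = ksc c X + ksc c Y"
  by (simp add: ksc_def vec_eq_iff distrib_left)

lemma ksc_add_left: "ksc (a + b) X = ksc a X + ksc b X"
  by (simp add: ksc_def vec_eq_iff distrib_right)

lemma ksc_one [simp]: "ksc 1 X = X"
  by (simp add: ksc_def vec_eq_iff)

lemma ksc_ksc [simp]: "ksc a (ksc b X) = ksc (a * b) X"
  by (simp add: ksc_def vec_eq_iff mult.assoc)

lemma ksc_minus_left: "ksc (- c) X = - ksc c X"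
  by (simp add: ksc_def vec_eq_iff)

lemma ksc_minus_right: "ksc c (- X) = - ksc c X"
  by (simp add: ksc_def vec_eq_iff)

lemma ksc_zero [simp]: "ksc 0 X = 0"
  by (simp add: ksc_def vec_eq_iff)

lemma ksc_mult_left: "ksc c X ** Y = ksc c (X ** Y)"
  by (simp add: ksc_def vec_eq_iff matrix_matrix_mult_def sum_distrib_left mult.assoc)

lemma ksc_mult_right: "X ** ksc c Y = ksc c (X ** Y)"
  by (simp add: ksc_def vec_eq_iff matrix_matrix_mult_def sum_distrib_left mult.left_commute)

lemma matrix_minus_ldistrib: "(A :: ('k::field,'n::finite) kmat) ** (- B) = - (A ** B)"
  by (simp add: vec_eq_iff matrix_matrix_mult_def sum_negf)

lemma matrix_minus_rdistrib: "(- A :: ('k::field,'n::finite) kmat) ** B = - (A ** B)"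
  by (simp add: vec_eq_iff matrix_matrix_mult_def sum_negf)

interpretation kv: vector_space "ksc :: 'k::field \<Rightarrow> ('k,'n::finite) kmat \<Rightarrow> ('k,'n) kmat"
  by unfold_locales (auto simp: ksc_add_right ksc_add_left)

definition matrix_unit :: "'n \<Rightarrow> 'n \<Rightarrow> ('k::field,'n::finite) kmat" where
  "matrix_unit a b = (\<chi> i j. if i = a \<and> j = b then 1 else 0)"

lemma matrix_unit_eq_iff:
  "matrix_unit a b = (matrix_unit a' b' :: ('k::field,'n::finite) kmat) \<longleftrightarrow> a = a' \<and> b = b'"
  by (auto simp: matrix_unit_def vec_eq_iff)

lemma independent_matrix_units:
  "kv.independent (range (case_prod matrix_unit) :: ('k::field,'n::finite) kmat set)"
  unfolding kv.independent_explicit_module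
proof (intro allI impI)
  fix t u v assume t: "finite t" "t \<subseteq> range (case_prod matrix_unit)"
    and sum0: "(\<Sum>w\<in>t. ksc (u w) w) = (0 :: ('k,'n) kmat)" and v: "v \<in> t"
  obtain a b where ab: "v = matrix_unit a b" using t v by auto
  have "w $ a $ b = (if w = v then 1 else 0)" if "w \<in> t" for w
    using t that by (auto simp: ab matrix_unit_eq_iff) (auto simp: matrix_unit_def)
  then have "(\<Sum>w\<in>t. ksc (u w) w) $ a $ b = (\<Sum>w\<in>t. if w = v then u w else 0)"
    by (auto simp: ksc_def intro!: sum.cong)
  also have "\<dots> = u v" using t v by simp
  finally have "(\<Sum>w\<in>t. ksc (u w) w) $ a $ b = u v" .
  then show "u v = 0" using sum0 by simp
qed

lemma matrix_unit_expansion: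
  "X = (\<Sum>p\<in>UNIV. ksc (X $ fst p $ snd p) (case_prod matrix_unit p :: ('k::field,'n::finite) kmat))"
proof -
  have "(\<Sum>p\<in>UNIV. ksc (X $ fst p $ snd p) (case_prod matrix_unit p)) $ i $ j
      = (\<Sum>p\<in>UNIV. if p = (i, j) then X $ i $ j else 0)" for i j
    unfolding sum_component by (rule sum.cong) (auto simp: ksc_def matrix_unit_def split: prod.splits)
  then show ?thesis by (simp add: vec_eq_iff)
qed

lemma span_matrix_units:
  "kv.span (range (case_prod matrix_unit)) = (UNIV :: ('k::field,'n::finite) kmat set)"
proof -
  have "X \<in> kv.span (range (case_prod matrix_unit))" for X :: "('k,'n) kmat"
    by (subst matrix_unit_expansion) (intro kv.span_sum kv.span_scale kv.span_base rangeI)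
  then show ?thesis by blast
qed

interpretation kv: finite_dimensional_vector_space
    "ksc :: 'k::field \<Rightarrow> ('k,'n::finite) kmat \<Rightarrow> ('k,'n) kmat" "range (case_prod matrix_unit)"
  by unfold_locales (auto simp: independent_matrix_units span_matrix_units)

section \<open>Indexed families of matrices\<close>

definition independent_family :: "nat \<Rightarrow> (nat \<Rightarrow> ('k::field,'n::finite) kmat) \<Rightarrow> bool" where
  "independent_family m b \<longleftrightarrow> (\<forall>c. (\<Sum>i<m. ksc (c i) (b i)) = 0 \<longrightarrow> (\<forall>i<m. c i = 0))"

lemma sum_family_reindex:
  "inj_on b {..<m} \<Longrightarrow> (\<Sum>v\<in>b ` {..<m}. ksc (u v) v) = (\<Sum>i<m. ksc (u (b i)) (b i))"
  by (simp add: sum.reindex)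

lemma independent_family_inj:
  fixes b :: "nat \<Rightarrow> ('k::field,'n::finite) kmat"
  assumes "independent_family m b"
  shows "inj_on b {..<m}"
proof (rule inj_onI, rule ccontr)
  fix i j assume ij: "i \<in> {..<m}" "j \<in> {..<m}" "b i = b j" "i \<noteq> j"
  define c :: "nat \<Rightarrow> 'k" where "c t = (if t = i then 1 else if t = j then -1 else 0)" for t
  have "(\<Sum>t<m. ksc (c t) (b t)) = (\<Sum>t<m. (if t = i then b i else 0) + (if t = j then - b j else 0))"
    using ij by (intro sum.cong) (auto simp: c_def ksc_def vec_eq_iff)
  also have "\<dots> = 0" using ij by (simp add: sum.distrib)
  finally have "c i = 0" using assms ij by (auto simp: independent_family_def)
  then show False by (simp add: c_def)
qed

lemma independent_family_iff:
  "independent_family m b \<longleftrightarrow> inj_on b {..<m} \<and> kv.independent (b ` {..<m})"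
proof
  assume ind: "independent_family m b"
  have inj: "inj_on b {..<m}" by (rule independent_family_inj[OF ind])
  have "\<forall>v\<in>b ` {..<m}. u v = 0" if "(\<Sum>v\<in>b ` {..<m}. ksc (u v) v) = 0" for u
    using that ind by (auto simp: sum_family_reindex[OF inj] independent_family_def)
  then show "inj_on b {..<m} \<and> kv.independent (b ` {..<m})"
    using inj by (simp add: kv.independent_explicit)
next
  assume "inj_on b {..<m} \<and> kv.independent (b ` {..<m})"
  then have inj: "inj_on b {..<m}" and ind: "kv.independent (b ` {..<m})" by auto
  show "independent_family m b" unfolding independent_family_def
  proof (intro allI impI)
    fix c i assume sum0: "(\<Sum>i<m. ksc (c i) (b i)) = 0" and i: "i < m"
    define u where "u v = c (inv_into {..<m} b v)" for v
    have "(\<Sum>v\<in>b ` {..<m}. ksc (u v) v) = 0"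
      using sum0 by (simp add: sum_family_reindex[OF inj] u_def inv_into_f_f[OF inj])
    then have "u (b i) = 0" using ind i by (auto simp: kv.independent_explicit)
    then show "c i = 0" using i by (simp add: u_def inv_into_f_f[OF inj])
  qed
qed

lemma sum_family_in_span: "(\<Sum>i<m. ksc (c i) (b i)) \<in> kv.span (b ` {..<m})"
  by (intro kv.span_sum kv.span_scale kv.span_base) auto

lemma span_family:
  fixes b :: "nat \<Rightarrow> ('k::field,'n::finite) kmat"
  assumes "inj_on b {..<m}"
  shows "kv.span (b ` {..<m}) = range (\<lambda>c. \<Sum>i<m. ksc (c i) (b i))"
proof
  show "kv.span (b ` {..<m}) \<subseteq> range (\<lambda>c. \<Sum>i<m. ksc (c i) (b i))"
  proof
    fix x assume "x \<in> kv.span (b ` {..<m})"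
    then have "x \<in> range (\<lambda>u. \<Sum>v\<in>b ` {..<m}. ksc (u v) v)"
      using kv.span_finite[of "b ` {..<m}"] by simp
    then obtain u where "x = (\<Sum>v\<in>b ` {..<m}. ksc (u v) v)"
      by blast
    then have "x = (\<Sum>i<m. ksc (u (b i)) (b i))" by (simp add: sum_family_reindex[OF assms])
    then show "x \<in> range (\<lambda>c. \<Sum>i<m. ksc (c i) (b i))"
      by (intro range_eqI[where x="\<lambda>i. u (b i)"])
  qed
  show "range (\<lambda>c. \<Sum>i<m. ksc (c i) (b i)) \<subseteq> kv.span (b ` {..<m})"
    using sum_family_in_span by blast
qed

lemma independent_family_if_spanning:
  assumes dim: "kv.dim V = m" and bV: "\<forall>i<m. b i \<in> V"
    and span: "\<forall>x\<in>V. \<exists>c. x = (\<Sum>i<m. ksc (c i) (b i))"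
  shows "independent_family m b"
proof -
  let ?B = "b ` {..<m}"
  have sub: "?B \<subseteq> V" using bV by auto
  have spanning: "V \<subseteq> kv.span ?B"
    using span sum_family_in_span by fastforce
  have ind: "kv.independent ?B"
    using kv.card_le_dim_spanning[OF sub spanning] dim card_image_le[of "{..<m}" b] by simp
  then have "card ?B = m" using kv.basis_card_eq_dim[OF sub spanning] dim by simp
  then have "inj_on b {..<m}" by (intro eq_card_imp_inj_on) simp_all
  then show ?thesis using ind by (simp add: independent_family_iff)
qed

lemma span_Int_span_of_independent:
  assumes ind: "kv.independent (S \<union> T)" and disj: "S \<inter> T = {}"
  shows "kv.span S \<inter> kv.span T = {0}"
proof -
  have fin: "finite S" "finite T" using kv.finiteI_independent[OF ind] by auto
  have "x = 0" if "x \<in> kv.span S" "x \<in> kv.span T" for x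
  proof -
    have "x \<in> range (\<lambda>u. \<Sum>v\<in>S. ksc (u v) v)"
      using that(1) kv.span_finite[OF fin(1)] by simp
    then obtain u where u: "x = (\<Sum>v\<in>S. ksc (u v) v)" by blast
    have "x \<in> range (\<lambda>w. \<Sum>v\<in>T. ksc (w v) v)"
      using that(2) kv.span_finite[OF fin(2)] by simp
    then obtain w where w: "x = (\<Sum>v\<in>T. ksc (w v) v)" by blast
    define f where "f v = (if v \<in> S then u v else - w v)" for v
    have "(\<Sum>v\<in>S \<union> T. ksc (f v) v) = (\<Sum>v\<in>S. ksc (f v) v) + (\<Sum>v\<in>T. ksc (f v) v)"
      using fin disj by (rule sum.union_disjoint)
    also have "(\<Sum>v\<in>S. ksc (f v) v) = x" using u by (auto simp: f_def intro!: sum.cong)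
    also have "(\<Sum>v\<in>T. ksc (f v) v) = (\<Sum>v\<in>T. - ksc (w v) v)"
      using disj by (intro sum.cong) (auto simp: f_def ksc_minus_left)
    also have "\<dots> = - x" using w by (simp add: sum_negf)
    finally have "(\<Sum>v\<in>S \<union> T. ksc (f v) v) = 0" by simp
    then have "\<forall>v\<in>S \<union> T. f v = 0" using ind unfolding kv.independent_explicit by blast
    then have "\<forall>v\<in>S. f v = 0" by blast
    then have "\<forall>v\<in>S. u v = 0" by (simp add: f_def)
    then show "x = 0" using u by simp
  qed
  then show ?thesis by (auto intro: kv.span_zero)
qed

lemma exists_complement_family:
  assumes "kv.subspace V"
  obtains m and h :: "nat \<Rightarrow> ('k::field,'n::finite) kmat" where
    "\<forall>x. \<exists>p. x - (\<Sum>i<m. ksc (p i) (h i)) \<in> V"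
    "\<forall>p. (\<Sum>i<m. ksc (p i) (h i)) \<in> V \<longrightarrow> (\<forall>i<m. p i = 0)"
proof -
  obtain B where B: "B \<subseteq> V" "kv.independent B" "V \<subseteq> kv.span B"
    by (meson kv.basis_exists)
  have VB: "V = kv.span B" using kv.span_subspace[OF B(1,3) assms] by simp
  define E where "E = kv.extend_basis B"
  have BE: "B \<subseteq> E" and indE: "kv.independent E" and spanE: "kv.span E = UNIV"
    using kv.extend_basis_superset[OF B(2)] kv.independent_extend_basis[OF B(2)]
      kv.span_extend_basis[OF B(2)] by (auto simp: E_def)
  define C where "C = E - B"
  have EBC: "E = B \<union> C" using BE by (auto simp: C_def)
  have indC: "kv.independent C" using kv.independent_mono[OF indE] by (auto simp: C_def)
  obtain h where "bij_betw h {0..<card C} C"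
    using ex_bij_betw_nat_finite[OF kv.finiteI_independent[OF indC]] by blast
  then have inj: "inj_on h {..<card C}" and C: "C = h ` {..<card C}"
    by (auto simp: bij_betw_def atLeast0LessThan)
  have spanC: "kv.span C = range (\<lambda>p. \<Sum>i<card C. ksc (p i) (h i))"
    using span_family[OF inj] C by simp
  have VC: "V \<inter> kv.span C = {0}"
  proof -
    have "kv.independent (B \<union> C)" using indE EBC by simp
    moreover have "B \<inter> C = {}" by (auto simp: C_def)
    ultimately show ?thesis unfolding VB by (rule span_Int_span_of_independent)
  qed
  have ind: "independent_family (card C) h" using inj indC C by (simp add: independent_family_iff)
  have spanning: "\<forall>x. \<exists>p. x - (\<Sum>i<card C. ksc (p i) (h i)) \<in> V"
  proof
    fix x :: "('k,'n) kmat"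
    have "x \<in> kv.span (B \<union> C)" using spanE EBC by simp
    then obtain y z where "x = y + z" "y \<in> V" "z \<in> kv.span C"
      unfolding kv.span_Un VB by blast
    moreover obtain p where "z = (\<Sum>i<card C. ksc (p i) (h i))" using \<open>z \<in> kv.span C\<close> spanC by blast
    ultimately have "x - (\<Sum>i<card C. ksc (p i) (h i)) \<in> V" by simp
    then show "\<exists>p. x - (\<Sum>i<card C. ksc (p i) (h i)) \<in> V" by blast
  qed
  have independent: "\<forall>p. (\<Sum>i<card C. ksc (p i) (h i)) \<in> V \<longrightarrow> (\<forall>i<card C. p i = 0)"
  proof (intro allI impI)
    fix p i assume "(\<Sum>i<card C. ksc (p i) (h i)) \<in> V" "i < card C"
    moreover have "(\<Sum>i<card C. ksc (p i) (h i)) \<in> kv.span C" using spanC by blast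
    ultimately have "(\<Sum>i<card C. ksc (p i) (h i)) = 0" using VC by blast
    then show "p i = 0" using ind \<open>i < card C\<close> by (simp add: independent_family_def)
  qed
  show ?thesis using spanning independent by (rule that)
qed

section \<open>Graphs of derivations are the deformations\<close>

lemma rlincomb_components:
  "rlincomb m r b =
    ((\<Sum>i<m. ksc (fst (r i)) (fst (b i))),
     (\<Sum>i<m. ksc (fst (r i)) (snd (b i)) + ksc (snd (r i)) (fst (b i))))"
proof -
  have foldr_radd: "foldr (\<lambda>i acc. radd (g i) acc) xs rzero
      = (sum_list (map (\<lambda>i. fst (g i)) xs), sum_list (map (\<lambda>i. snd (g i)) xs))" for g xs
    by (induction xs) (auto simp: radd_def rzero_def)
  show ?thesis
    unfolding rlincomb_def foldr_radd
    by (simp add: rsc_def sum_list_distinct_conv_sum_set atLeast0LessThan)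
qed

lemma Sigma_eq_Sigma_iff: "Sigma A B = Sigma A C \<longleftrightarrow> (\<forall>a\<in>A. B a = C a)"
proof
  assume eq: "Sigma A B = Sigma A C"
  show "\<forall>a\<in>A. B a = C a"
  proof
    fix a assume "a \<in> A"
    then have "B a = Sigma A B `` {a}" and "C a = Sigma A C `` {a}" by auto
    then show "B a = C a" using eq by simp
  qed
qed (rule Sigma_cong[OF refl], simp)

lemma image_Sigma_fibrewise: "(\<lambda>(a, x). (a, f a x)) ` Sigma A B = Sigma A (\<lambda>a. f a ` B a)"
  by auto

lemma Sigma_fst_Image: "Sigma (fst ` A) (\<lambda>a. A `` {a}) = A"
  by (auto intro: rev_image_eqI)

lemma Image_singleton_notin_fst: "a \<notin> fst ` A \<Longrightarrow> A `` {a} = {}"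
  by (auto intro: rev_image_eqI)

lemma DefR_fst_image: "A \<in> DefR A0 d \<Longrightarrow> fst ` A = A0"
  by (simp add: DefR_def)

lemma DefR_radd: "A \<in> DefR A0 d \<Longrightarrow> X \<in> A \<Longrightarrow> Y \<in> A \<Longrightarrow> radd X Y \<in> A"
  by (simp add: DefR_def R_subalgebra_def)

lemma DefR_rmult: "A \<in> DefR A0 d \<Longrightarrow> X \<in> A \<Longrightarrow> Y \<in> A \<Longrightarrow> rmult X Y \<in> A"
  by (simp add: DefR_def R_subalgebra_def)

lemma DefR_rsc: "A \<in> DefR A0 d \<Longrightarrow> X \<in> A \<Longrightarrow> rsc u X \<in> A"
  by (cases u) (simp add: DefR_def R_subalgebra_def)

lemma DefR_basis:
  assumes "A \<in> DefR A0 d"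
  obtains b where "\<forall>i<d. b i \<in> A" "\<forall>X\<in>A. \<exists>r. X = rlincomb d r b"
proof -
  have "R_free_rank A d" using assms by (simp add: DefR_def)
  then obtain b where "\<forall>i<d. b i \<in> A" "\<forall>X\<in>A. \<exists>r. X = rlincomb d r b"
    unfolding R_free_rank_def by auto
  then show ?thesis by (rule that)
qed

locale subalgebra_of_dim =
  fixes A0 :: "('k::field,'n::finite) kmat set" and d :: nat
  assumes subalgebra: "k_subalgebra A0" and dimension: "k_dim A0 d"
begin

lemma A0_zero: "0 \<in> A0"
  and A0_one: "mat 1 \<in> A0"
  and A0_add: "x \<in> A0 \<Longrightarrow> y \<in> A0 \<Longrightarrow> x + y \<in> A0"
  and A0_mult: "x \<in> A0 \<Longrightarrow> y \<in> A0 \<Longrightarrow> x ** y \<in> A0"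
  and A0_scale: "x \<in> A0 \<Longrightarrow> ksc c x \<in> A0"
  using subalgebra by (auto simp: k_subalgebra_def)

lemma subspace_A0: "kv.subspace A0"
  unfolding kv.subspace_def using A0_zero A0_add A0_scale by blast

lemma A0_uminus: "x \<in> A0 \<Longrightarrow> - x \<in> A0"
  using kv.subspace_neg[OF subspace_A0] .

lemma A0_diff: "x \<in> A0 \<Longrightarrow> y \<in> A0 \<Longrightarrow> x - y \<in> A0"
  using kv.subspace_diff[OF subspace_A0] .

lemma A0_sum: "(\<And>i. i \<in> S \<Longrightarrow> f i \<in> A0) \<Longrightarrow> sum f S \<in> A0"
  using kv.subspace_sum[OF subspace_A0] by blast

lemma obtain_basis:
  obtains \<beta> where "\<forall>i<d. \<beta> i \<in> A0" "\<forall>x\<in>A0. \<exists>c. x = (\<Sum>i<d. ksc (c i) (\<beta> i))"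
    "independent_family d \<beta>"
  using dimension unfolding k_dim_def independent_family_def by blast

lemma dim_A0: "kv.dim A0 = d"
proof -
  obtain \<beta> where \<beta>A0: "\<forall>i<d. \<beta> i \<in> A0" and span: "\<forall>x\<in>A0. \<exists>c. x = (\<Sum>i<d. ksc (c i) (\<beta> i))"
    and ind: "independent_family d \<beta>" by (rule obtain_basis)
  have "\<beta> ` {..<d} \<subseteq> A0" using \<beta>A0 by auto
  moreover have "A0 \<subseteq> kv.span (\<beta> ` {..<d})" using span sum_family_in_span by fastforce
  ultimately have "A0 = kv.span (\<beta> ` {..<d})" using kv.span_subspace subspace_A0 by metis
  then show ?thesis
    using ind by (simp add: independent_family_iff kv.dim_eq_card_independent card_image)
qed

lemma cos_mem [simp]: "y \<in> Defs.cos A0 p \<longleftrightarrow> y - p \<in> A0"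
  by (simp add: Defs.cos_def)

lemma cos_self: "p \<in> Defs.cos A0 p"
  by (simp add: A0_zero)

lemma cos_eq_cos_iff: "Defs.cos A0 p = Defs.cos A0 q \<longleftrightarrow> p - q \<in> A0"
proof
  assume "Defs.cos A0 p = Defs.cos A0 q"
  then show "p - q \<in> A0" using cos_self[of p] by simp
next
  assume pq: "p - q \<in> A0"
  show "Defs.cos A0 p = Defs.cos A0 q"
  proof (rule set_eqI)
    fix x
    have "x - q = (x - p) + (p - q)" and "x - p = (x - q) - (p - q)" by simp_all
    then show "x \<in> Defs.cos A0 p \<longleftrightarrow> x \<in> Defs.cos A0 q"
      using A0_add[OF _ pq] A0_diff[OF _ pq] cos_mem by metis
  qed
qed

lemma Der_coset: assumes "D \<in> Der A0" "a \<in> A0" obtains x where "D a = Defs.cos A0 x"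
  using assms unfolding Der_def quotmod_def by blast

lemma Der_nonempty: assumes "D \<in> Der A0" "a \<in> A0" obtains x where "x \<in> D a"
  using Der_coset[OF assms] cos_self by metis

lemma Der_eq_cos: assumes "D \<in> Der A0" "a \<in> A0" "x \<in> D a" shows "D a = Defs.cos A0 x"
  using Der_coset[OF assms(1,2)] assms(3) cos_eq_cos_iff by (metis cos_mem)

lemma Der_outside: "D \<in> Der A0 \<Longrightarrow> a \<notin> A0 \<Longrightarrow> D a = {}"
  by (auto simp: Der_def)

lemma Der_linear: assumes "D \<in> Der A0" "a \<in> A0" "b \<in> A0" "x \<in> D a" "y \<in> D b"
  shows "ksc c x + y \<in> D (ksc c a + b)"
proof -
  have "D (ksc c a + b) = Defs.cos A0 (ksc c x + y)" using assms by (auto simp: Der_def)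
  then show ?thesis using cos_self by simp
qed

lemma Der_Leibniz: assumes "D \<in> Der A0" "a \<in> A0" "b \<in> A0" "x \<in> D a" "y \<in> D b"
  shows "a ** y + x ** b \<in> D (a ** b)"
proof -
  have "D (a ** b) = Defs.cos A0 (a ** y + x ** b)" using assms by (auto simp: Der_def)
  then show ?thesis using cos_self by simp
qed

lemma Der_zero: assumes "D \<in> Der A0" shows "D 0 = A0"
proof -
  obtain x where "x \<in> D 0" using Der_nonempty[OF assms A0_zero] .
  then have "0 \<in> D 0" using Der_Leibniz[OF assms A0_zero A0_zero] by fastforce
  then have "D 0 = Defs.cos A0 0" by (rule Der_eq_cos[OF assms A0_zero])
  then show ?thesis by (simp add: Defs.cos_def)
qed

lemma Der_one: assumes "D \<in> Der A0" shows "0 \<in> D (mat 1)"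
proof -
  obtain x where x: "x \<in> D (mat 1)" using Der_nonempty[OF assms A0_one] .
  have "x + x \<in> D (mat 1)" using Der_Leibniz[OF assms A0_one A0_one x x] by simp
  then have "x \<in> A0" using Der_eq_cos[OF assms A0_one x] by simp
  then show ?thesis using Der_eq_cos[OF assms A0_one x] by (simp add: A0_uminus)
qed

lemma Der_shift: assumes "D \<in> Der A0" "a \<in> A0" "x \<in> D a" "z \<in> A0" shows "x + z \<in> D a"
  using Der_eq_cos[OF assms(1-3)] assms(4) by simp

lemma Der_scale: assumes "D \<in> Der A0" "a \<in> A0" "x \<in> D a" shows "ksc c x \<in> D (ksc c a)"
  using Der_linear[OF assms(1,2) A0_zero assms(3), of 0 c] Der_zero[OF assms(1)] A0_zero by simp

lemma Der_sum:
  fixes n :: nat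
  assumes D: "D \<in> Der A0" and y: "\<forall>i<n. \<beta> i \<in> A0 \<and> y i \<in> D (\<beta> i)"
  shows "(\<Sum>i<n. ksc (c i) (y i)) \<in> D (\<Sum>i<n. ksc (c i) (\<beta> i))"
  using y
proof (induction n)
  case 0
  then show ?case using Der_zero[OF D] A0_zero by simp
next
  case (Suc n)
  then have IH: "(\<Sum>i<n. ksc (c i) (y i)) \<in> D (\<Sum>i<n. ksc (c i) (\<beta> i))" by simp
  have "(\<Sum>i<n. ksc (c i) (\<beta> i)) \<in> A0" using Suc.prems by (intro A0_sum A0_scale) simp
  then have "ksc (c n) (y n) + (\<Sum>i<n. ksc (c i) (y i))
      \<in> D (ksc (c n) (\<beta> n) + (\<Sum>i<n. ksc (c i) (\<beta> i)))"
    using Suc.prems by (intro Der_linear[OF D _ _ _ IH]) simp_all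
  then show ?case by (simp only: sum.lessThan_Suc add.commute)
qed

lemma Sigma_R_subalgebra: assumes D: "D \<in> Der A0" shows "R_subalgebra (Sigma A0 D)"
  unfolding R_subalgebra_def
proof (intro conjI ballI allI)
  show "rzero \<in> Sigma A0 D" using Der_zero[OF D] A0_zero by (simp add: rzero_def)
  show "rone \<in> Sigma A0 D" using Der_one[OF D] A0_one by (simp add: rone_def)
  fix X Y assume "X \<in> Sigma A0 D" "Y \<in> Sigma A0 D"
  then obtain a x b y where X: "X = (a, x)" "a \<in> A0" "x \<in> D a" and Y: "Y = (b, y)" "b \<in> A0" "y \<in> D b"
    by auto
  show "radd X Y \<in> Sigma A0 D"
    using Der_linear[OF D X(2) Y(2) X(3) Y(3), of 1] X Y A0_add by (simp add: radd_def)
  show "rmult X Y \<in> Sigma A0 D"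
    using Der_Leibniz[OF D X(2) Y(2) X(3) Y(3)] X Y A0_mult by (simp add: rmult_def)
next
  fix u X assume "X \<in> Sigma A0 D"
  then obtain a x where X: "X = (a, x)" "a \<in> A0" "x \<in> D a" by auto
  have "ksc (fst u) x + ksc (snd u) a \<in> D (ksc (fst u) a)"
    by (rule Der_shift[OF D A0_scale[OF X(2)] Der_scale[OF D X(2,3)] A0_scale[OF X(2)]])
  then show "rsc u X \<in> Sigma A0 D" using X A0_scale by (simp add: rsc_def)
qed

lemma fst_Sigma_Der: assumes D: "D \<in> Der A0" shows "fst ` Sigma A0 D = A0"
proof
  show "A0 \<subseteq> fst ` Sigma A0 D"
  proof
    fix a assume a: "a \<in> A0"
    obtain x where "x \<in> D a" using Der_nonempty[OF D a] .
    then show "a \<in> fst ` Sigma A0 D" using a by force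
  qed
qed auto

lemma Sigma_R_free_rank: assumes D: "D \<in> Der A0" shows "R_free_rank (Sigma A0 D) d"
proof -
  obtain \<beta> where \<beta>A0: "\<forall>i<d. \<beta> i \<in> A0" and span: "\<forall>x\<in>A0. \<exists>c. x = (\<Sum>i<d. ksc (c i) (\<beta> i))"
    and ind: "independent_family d \<beta>" by (rule obtain_basis)
  define y where "y i = (SOME y. y \<in> D (\<beta> i))" for i
  have y: "y i \<in> D (\<beta> i)" if "i < d" for i
    using Der_nonempty[OF D] \<beta>A0 that unfolding y_def by (metis someI)
  define b where "b i = (\<beta> i, y i)" for i
  show ?thesis unfolding R_free_rank_def
  proof (intro exI[of _ b] conjI allI impI ballI)
    show "i < d \<Longrightarrow> b i \<in> Sigma A0 D" for i using \<beta>A0 y by (simp add: b_def)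
  next
    fix X assume "X \<in> Sigma A0 D"
    then obtain a x where X: "X = (a, x)" "a \<in> A0" "x \<in> D a" by auto
    obtain c where c: "a = (\<Sum>i<d. ksc (c i) (\<beta> i))" using span X by blast
    have "(\<Sum>i<d. ksc (c i) (y i)) \<in> D a" using Der_sum[OF D] \<beta>A0 y c by auto
    then have "D a = Defs.cos A0 (\<Sum>i<d. ksc (c i) (y i))" by (rule Der_eq_cos[OF D X(2)])
    then have "x - (\<Sum>i<d. ksc (c i) (y i)) \<in> A0" using X(3) by simp
    then obtain e where e: "x - (\<Sum>i<d. ksc (c i) (y i)) = (\<Sum>i<d. ksc (e i) (\<beta> i))"
      using span by blast
    have "rlincomb d (\<lambda>i. (c i, e i)) b = (a, x)"
      unfolding rlincomb_components using c e by (simp add: b_def sum.distrib algebra_simps)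
    then show "\<exists>r. X = rlincomb d r b" using X by metis
  next
    fix r i assume r: "rlincomb d r b = rzero" and i: "i < d"
    have "(\<Sum>i<d. ksc (fst (r i)) (\<beta> i)) = 0"
      using r by (simp add: rlincomb_components rzero_def b_def)
    then have fst0: "\<forall>i<d. fst (r i) = 0"
      using ind unfolding independent_family_def by (metis (no_types))
    have "(\<Sum>i<d. ksc (fst (r i)) (y i) + ksc (snd (r i)) (\<beta> i)) = 0"
      using r by (simp add: rlincomb_components rzero_def b_def)
    then have "(\<Sum>i<d. ksc (snd (r i)) (\<beta> i)) = 0" using fst0 by simp
    then have "\<forall>i<d. snd (r i) = 0"
      using ind unfolding independent_family_def by (metis (no_types))
    then show "r i = (0, 0)" using fst0 i by (simp add: prod_eq_iff)
  qed
qed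

lemma Sigma_R_free_quotient: assumes D: "D \<in> Der A0" shows "R_free_quotient (Sigma A0 D)"
proof -
  obtain m and h :: "nat \<Rightarrow> ('k,'n) kmat"
    where spanning: "\<forall>x. \<exists>p. x - (\<Sum>i<m. ksc (p i) (h i)) \<in> A0"
      and independent: "\<forall>p. (\<Sum>i<m. ksc (p i) (h i)) \<in> A0 \<longrightarrow> (\<forall>i<m. p i = 0)"
    by (rule exists_complement_family[OF subspace_A0])
  define c where "c i = (h i, 0 :: ('k,'n) kmat)" for i
  have rl: "rlincomb m r c = ((\<Sum>i<m. ksc (fst (r i)) (h i)), (\<Sum>i<m. ksc (snd (r i)) (h i)))" for r
    by (simp add: rlincomb_components c_def)
  show ?thesis unfolding R_free_quotient_def
  proof (intro exI[of _ m] exI[of _ c] conjI allI impI)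
    fix X :: "('k,'n) rmat"
    obtain p where a: "fst X - (\<Sum>i<m. ksc (p i) (h i)) \<in> A0" using spanning by blast
    define a where "a = fst X - (\<Sum>i<m. ksc (p i) (h i))"
    obtain x where x: "x \<in> D a" using Der_nonempty[OF D] a a_def by blast
    obtain q where q: "(snd X - x) - (\<Sum>i<m. ksc (q i) (h i)) \<in> A0" using spanning by blast
    have "x + ((snd X - x) - (\<Sum>i<m. ksc (q i) (h i))) \<in> D a"
      using Der_shift[OF D _ x q] a a_def by simp
    then have "rsub X (rlincomb m (\<lambda>i. (p i, q i)) c) \<in> Sigma A0 D"
      using a a_def by (simp add: rl rsub_def)
    then show "\<exists>r. rsub X (rlincomb m r c) \<in> Sigma A0 D"
      by (intro exI[of _ "\<lambda>i. (p i, q i)"])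
  next
    fix r i assume r: "rlincomb m r c \<in> Sigma A0 D" and i: "i < m"
    have "(\<Sum>i<m. ksc (fst (r i)) (h i)) \<in> A0" using r by (simp add: rl)
    then have fst0: "\<forall>i<m. fst (r i) = 0" using spec[OF independent, of "\<lambda>i. fst (r i)"] by simp
    then have "(\<Sum>i<m. ksc (fst (r i)) (h i)) = 0" by simp
    then have "(\<Sum>i<m. ksc (snd (r i)) (h i)) \<in> D 0" using r by (simp add: rl)
    then have "(\<Sum>i<m. ksc (snd (r i)) (h i)) \<in> A0" using Der_zero[OF D] by simp
    then have "\<forall>i<m. snd (r i) = 0" using spec[OF independent, of "\<lambda>i. snd (r i)"] by simp
    then show "r i = (0, 0)" using fst0 i by (simp add: prod_eq_iff)
  qed
qed

lemma Sigma_in_DefR: "D \<in> Der A0 \<Longrightarrow> Sigma A0 D \<in> DefR A0 d"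
  using Sigma_R_subalgebra Sigma_R_free_rank Sigma_R_free_quotient fst_Sigma_Der
  by (simp add: DefR_def)

lemma DefR_zero_fibre:
  assumes A: "A \<in> DefR A0 d"
  shows "(0, y) \<in> A \<longleftrightarrow> y \<in> A0"
proof -
  have fstA: "fst ` A = A0" by (rule DefR_fst_image[OF A])
  obtain b where bA: "\<forall>i<d. b i \<in> A" and span: "\<forall>X\<in>A. \<exists>r. X = rlincomb d r b"
    by (rule DefR_basis[OF A])
  \<comment> \<open>the reductions of an \<open>R\<close>-basis of \<open>A\<close> span \<open>A\<^sub>0\<close>, so by counting they are a \<open>k\<close>-basis\<close>
  have ind: "independent_family d (\<lambda>i. fst (b i))"
  proof (rule independent_family_if_spanning[OF dim_A0])
    show "\<forall>i<d. fst (b i) \<in> A0" using bA fstA by auto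
    show "\<forall>x\<in>A0. \<exists>c. x = (\<Sum>i<d. ksc (c i) (fst (b i)))"
    proof
      fix x assume "x \<in> A0"
      then obtain X where "X \<in> A" "x = fst X" using fstA by blast
      moreover obtain r where "X = rlincomb d r b" using span \<open>X \<in> A\<close> by blast
      ultimately have "x = (\<Sum>i<d. ksc (fst (r i)) (fst (b i)))" by (simp add: rlincomb_components)
      then show "\<exists>c. x = (\<Sum>i<d. ksc (c i) (fst (b i)))" by (intro exI[of _ "\<lambda>i. fst (r i)"])
    qed
  qed
  show ?thesis
  proof
    assume "(0, y) \<in> A"
    then obtain r where r: "(0, y) = rlincomb d r b" using span by blast
    then have "(\<Sum>i<d. ksc (fst (r i)) (fst (b i))) = 0" by (simp add: rlincomb_components)
    then have fst0: "\<forall>i<d. fst (r i) = 0"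
      using spec[OF ind[unfolded independent_family_def], of "\<lambda>i. fst (r i)"] by simp
    have "y = (\<Sum>i<d. ksc (fst (r i)) (snd (b i)) + ksc (snd (r i)) (fst (b i)))"
      using r by (simp add: rlincomb_components)
    also have "\<dots> = (\<Sum>i<d. ksc (snd (r i)) (fst (b i)))" using fst0 by (intro sum.cong) auto
    also have "\<dots> \<in> A0" using bA fstA by (intro A0_sum A0_scale) auto
    finally show "y \<in> A0" .
  next
    assume "y \<in> A0"
    then obtain X where "X \<in> A" "y = fst X" using fstA by auto
    then show "(0, y) \<in> A" using DefR_rsc[OF A, of X "(0, 1)"] by (simp add: rsc_def)
  qed
qed

lemma DefR_fibre:
  assumes A: "A \<in> DefR A0 d" and ay: "(a, y) \<in> A"
  shows "A `` {a} = Defs.cos A0 y"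
proof -
  have "(a, y') \<in> A \<longleftrightarrow> y' - y \<in> A0" for y'
  proof
    assume "(a, y') \<in> A"
    then have "radd (a, y') (rsc (-1, 0) (a, y)) \<in> A" by (intro DefR_radd[OF A] DefR_rsc[OF A] ay)
    then show "y' - y \<in> A0" using DefR_zero_fibre[OF A] by (simp add: radd_def rsc_def ksc_minus_left)
  next
    assume "y' - y \<in> A0"
    then have "(0, y' - y) \<in> A" using DefR_zero_fibre[OF A] by simp
    then have "radd (a, y) (0, y' - y) \<in> A" by (rule DefR_radd[OF A ay])
    then show "(a, y') \<in> A" by (simp add: radd_def)
  qed
  then show ?thesis by (simp add: set_eq_iff)
qed

lemma Image_in_Der: assumes A: "A \<in> DefR A0 d" shows "(\<lambda>a. A `` {a}) \<in> Der A0"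
proof -
  have fstA: "fst ` A = A0" by (rule DefR_fst_image[OF A])
  show ?thesis unfolding Der_def
  proof (intro CollectI conjI ballI allI impI)
    fix a assume "a \<in> A0"
    then obtain X where "X \<in> A" "a = fst X" using fstA by blast
    then have "(a, snd X) \<in> A" by simp
    then show "A `` {a} \<in> quotmod A0" using DefR_fibre[OF A] by (simp add: quotmod_def)
  next
    fix a assume "a \<notin> A0"
    then show "A `` {a} = {}" using Image_singleton_notin_fst[of a A] fstA by simp
  next
    fix a b c x y assume "x \<in> A `` {a}" "y \<in> A `` {b}"
    then have ax: "(a, x) \<in> A" and b_y: "(b, y) \<in> A" by auto
    have "radd (rsc (c, 0) (a, x)) (b, y) \<in> A" by (intro DefR_radd[OF A] DefR_rsc[OF A] ax b_y)
    then have "(ksc c a + b, ksc c x + y) \<in> A" by (simp add: radd_def rsc_def)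
    then show "A `` {ksc c a + b} = Defs.cos A0 (ksc c x + y)" by (rule DefR_fibre[OF A])
    have "rmult (a, x) (b, y) \<in> A" by (intro DefR_rmult[OF A] ax b_y)
    then have "(a ** b, a ** y + x ** b) \<in> A" by (simp add: rmult_def)
    then show "A `` {a ** b} = Defs.cos A0 (a ** y + x ** b)" by (rule DefR_fibre[OF A])
  qed
qed

lemma bij_betw_Sigma_Der_DefR: "bij_betw (Sigma A0) (Der A0) (DefR A0 d)"
proof (rule bij_betw_byWitness[where f'="\<lambda>A a. A `` {a}"])
  show "\<forall>D\<in>Der A0. (\<lambda>a. Sigma A0 D `` {a}) = D"
  proof
    fix D assume D: "D \<in> Der A0"
    show "(\<lambda>a. Sigma A0 D `` {a}) = D"
    proof
      fix a show "Sigma A0 D `` {a} = D a" using Der_outside[OF D, of a] by (cases "a \<in> A0") auto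
    qed
  qed
  show "\<forall>A\<in>DefR A0 d. Sigma A0 (\<lambda>a. A `` {a}) = A"
    using DefR_fst_image Sigma_fst_Image by metis
  show "Sigma A0 ` Der A0 \<subseteq> DefR A0 d" using Sigma_in_DefR by blast
  show "(\<lambda>A a. A `` {a}) ` DefR A0 d \<subseteq> Der A0" using Image_in_Der by blast
qed

section \<open>The action of \<open>G(R)\<close> shifts derivations by inner derivations\<close>

lemma image_shift_cos: "(\<lambda>x. x + t) ` Defs.cos A0 y = Defs.cos A0 (y + t)"
proof (rule set_eqI)
  fix z
  show "z \<in> (\<lambda>x. x + t) ` Defs.cos A0 y \<longleftrightarrow> z \<in> Defs.cos A0 (y + t)"
  proof
    assume "z \<in> Defs.cos A0 (y + t)"
    then have "z - t \<in> Defs.cos A0 y" by (simp add: algebra_simps)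
    then show "z \<in> (\<lambda>x. x + t) ` Defs.cos A0 y" by (rule image_eqI[rotated]) simp
  qed auto
qed

lemma Der_shift_eq_iff:
  assumes D: "D \<in> Der A0" and D': "D' \<in> Der A0"
  shows "(\<forall>a\<in>A0. D' a = (\<lambda>x. x + t a) ` D a) \<longleftrightarrow>
    (\<forall>a\<in>A0. \<forall>x\<in>D a. \<forall>y\<in>D' a. x - y + t a \<in> A0)"
proof -
  have pointwise: "D' a = (\<lambda>x. x + t a) ` D a \<longleftrightarrow> x - y + t a \<in> A0"
    if a: "a \<in> A0" and x: "x \<in> D a" and y: "y \<in> D' a" for a x y
  proof -
    have "D' a = (\<lambda>x. x + t a) ` D a \<longleftrightarrow> Defs.cos A0 y = Defs.cos A0 (x + t a)"
      using Der_eq_cos[OF D a x] Der_eq_cos[OF D' a y] image_shift_cos by simp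
    also have "\<dots> \<longleftrightarrow> - (x - y + t a) \<in> A0" by (simp add: cos_eq_cos_iff algebra_simps)
    also have "\<dots> \<longleftrightarrow> x - y + t a \<in> A0" by (metis A0_uminus minus_minus)
    finally show ?thesis .
  qed
  show ?thesis
  proof
    assume "\<forall>a\<in>A0. D' a = (\<lambda>x. x + t a) ` D a"
    then show "\<forall>a\<in>A0. \<forall>x\<in>D a. \<forall>y\<in>D' a. x - y + t a \<in> A0" using pointwise by blast
  next
    assume shifted: "\<forall>a\<in>A0. \<forall>x\<in>D a. \<forall>y\<in>D' a. x - y + t a \<in> A0"
    show "\<forall>a\<in>A0. D' a = (\<lambda>x. x + t a) ` D a"
    proof
      fix a assume a: "a \<in> A0"
      obtain x y where "x \<in> D a" "y \<in> D' a" using Der_nonempty[OF D a] Der_nonempty[OF D' a] by metis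
      then show "D' a = (\<lambda>x. x + t a) ` D a" using pointwise[OF a] shifted a by blast
    qed
  qed
qed

lemma inner_rel_iff:
  "(D, D') \<in> inner_rel A0 \<longleftrightarrow> D \<in> Der A0 \<and> D' \<in> Der A0 \<and>
    (\<exists>m. \<forall>a\<in>A0. \<forall>x\<in>D a. \<forall>y\<in>D' a. x - y + (a ** m - m ** a) \<in> A0)"
proof -
  have "Defs.cos A0 (x - y) = Defs.cos A0 (a ** m - m ** a) \<longleftrightarrow>
      x - y + (a ** (- m) - (- m) ** a) \<in> A0" for x y a m
    by (simp add: cos_eq_cos_iff matrix_minus_ldistrib matrix_minus_rdistrib algebra_simps)
  then have "(\<exists>m. \<forall>a\<in>A0. \<forall>x\<in>D a. \<forall>y\<in>D' a. Defs.cos A0 (x - y) = Defs.cos A0 (a ** m - m ** a)) \<longleftrightarrow>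
      (\<exists>m. \<forall>a\<in>A0. \<forall>x\<in>D a. \<forall>y\<in>D' a. x - y + (a ** m - m ** a) \<in> A0)"
    by (metis minus_minus)
  then show ?thesis unfolding inner_rel_def by simp
qed

end

lemma rinv_scalar_plus_eps:
  fixes Q :: "('k::field,'n::finite) rmat"
  assumes c: "c \<noteq> 0" and fstQ: "fst Q = ksc c (mat 1)"
  shows "rinv Q = (ksc (1/c) (mat 1), - ksc (1/c * (1/c)) (snd Q))"
proof -
  let ?Q' = "(ksc (1/c) (mat 1), - ksc (1/c * (1/c)) (snd Q)) :: ('k,'n) rmat"
  have unique: "Q'' = ?Q'" if "rmult Q Q'' = rone" for Q''
  proof -
    have 1: "ksc c (fst Q'') = mat 1" and 2: "ksc c (snd Q'') + snd Q ** fst Q'' = 0"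
      using that fstQ by (auto simp: rmult_def rone_def ksc_mult_left)
    have fst: "fst Q'' = ksc (1/c) (mat 1)"
      using arg_cong[OF 1, of "ksc (1/c)"] c by simp
    have "ksc (1/c) (ksc c (snd Q'') + snd Q ** fst Q'') = 0" using 2 by simp
    then have "snd Q'' + ksc (1/c * (1/c)) (snd Q) = 0"
      using c fst by (simp add: ksc_add_right ksc_mult_right)
    then have "snd Q'' = - ksc (1/c * (1/c)) (snd Q)" by (simp add: eq_neg_iff_add_eq_0)
    then show ?thesis using fst by (simp add: prod_eq_iff)
  qed
  have "rmult Q ?Q' = rone \<and> rmult ?Q' Q = rone"
    using c fstQ by (auto simp: rmult_def rone_def ksc_minus_right ksc_mult_left ksc_mult_right
      matrix_minus_ldistrib matrix_minus_rdistrib)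
  then have "rmult Q (rinv Q) = rone"
    unfolding rinv_def by (rule someI[where P="\<lambda>Q'. rmult Q Q' = rone \<and> rmult Q' Q = rone", THEN conjunct1])
  then show ?thesis by (rule unique)
qed

text \<open>Since \<open>\<epsilon>\<^sup>2 = 0\<close>: \<open>(c I + \<epsilon> S)\<^sup>-\<^sup>1 (a + \<epsilon> x) (c I + \<epsilon> S) = a + \<epsilon> (x + [a, S/c])\<close>.\<close>

lemma conjR_Sigma:
  fixes Q :: "('k::field,'n::finite) rmat"
  assumes c: "c \<noteq> 0" and fstQ: "fst Q = ksc c (mat 1)"
  defines "m \<equiv> ksc (1/c) (snd Q)"
  shows "conjR Q (Sigma A B) = Sigma A (\<lambda>a. (\<lambda>x. x + (a ** m - m ** a)) ` B a)"
proof -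
  have "rmult (rinv Q) (rmult (a, x) Q) = (a, x + (a ** m - m ** a))" for a x
  proof -
    have "1 / c * (1 / c) * c = 1/c" using c by (simp add: field_simps)
    then show ?thesis
      using c fstQ unfolding rinv_scalar_plus_eps[OF c fstQ] m_def
      by (simp add: rmult_def ksc_add_right ksc_mult_left ksc_mult_right matrix_add_ldistrib
          matrix_minus_rdistrib algebra_simps)
  qed
  then show ?thesis
    unfolding conjR_def image_Sigma_fibrewise[symmetric] by (intro image_cong) auto
qed

lemma unipotent_class_in_GR:
  fixes m :: "('k::field,'n::finite) kmat"
  shows "scalar_rel `` {(mat 1, m)} \<in> GR" and "(mat 1, m) \<in> scalar_rel `` {(mat 1, m)}"
proof -
  have unit: "(1, 0) \<in> (Runits :: 'k rel_ring set)"
    by (auto simp: Runits_def Rmul_def intro!: exI[of _ "(1, 0)"])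
  have inv: "(mat 1, m) \<in> GLR"
    unfolding GLR_def mem_Collect_eq
    by (rule exI[of _ "(mat 1, - m)"]) (simp add: rmult_def rone_def matrix_minus_ldistrib)
  then show "(mat 1, m) \<in> scalar_rel `` {(mat 1, m)}"
    using unit by (force simp: scalar_rel_def rsc_def)
  have "scalar_rel `` {(mat 1, m)} \<in> PGLR"
    unfolding PGLR_def quotient_def using inv by blast
  moreover have "\<exists>c. c \<noteq> 0 \<and> fst Q = ksc c (mat 1)" if Q: "Q \<in> scalar_rel `` {(mat 1, m)}" for Q
  proof -
    obtain u where "u \<in> Runits" "Q = rsc u (mat 1, m)" using Q unfolding scalar_rel_def by blast
    moreover have "fst u \<noteq> 0" using \<open>u \<in> Runits\<close> by (auto simp: Runits_def Rmul_def)
    ultimately show ?thesis by (auto simp: rsc_def)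
  qed
  ultimately show "scalar_rel `` {(mat 1, m)} \<in> GR" by (simp add: GR_def)
qed

context subalgebra_of_dim
begin

lemma orbit_rel_Sigma_iff:
  assumes D: "D \<in> Der A0" and D': "D' \<in> Der A0"
  shows "(Sigma A0 D, Sigma A0 D') \<in> orbit_rel A0 d \<longleftrightarrow> (D, D') \<in> inner_rel A0"
proof
  assume "(Sigma A0 D, Sigma A0 D') \<in> orbit_rel A0 d"
  then obtain P Q where "P \<in> GR" "Q \<in> P" and conj: "Sigma A0 D' = conjR Q (Sigma A0 D)"
    unfolding orbit_rel_def by blast
  then obtain c where c: "c \<noteq> 0" "fst Q = ksc c (mat 1)" unfolding GR_def by blast
  let ?m = "ksc (1/c) (snd Q)"
  have "\<forall>a\<in>A0. D' a = (\<lambda>x. x + (a ** ?m - ?m ** a)) ` D a"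
    using conj unfolding conjR_Sigma[OF c] Sigma_eq_Sigma_iff .
  then show "(D, D') \<in> inner_rel A0"
    unfolding inner_rel_iff Der_shift_eq_iff[OF D D'] using D D' by blast
next
  assume "(D, D') \<in> inner_rel A0"
  then obtain m where "\<forall>a\<in>A0. \<forall>x\<in>D a. \<forall>y\<in>D' a. x - y + (a ** m - m ** a) \<in> A0"
    unfolding inner_rel_iff by blast
  then have "Sigma A0 D' = Sigma A0 (\<lambda>a. (\<lambda>x. x + (a ** m - m ** a)) ` D a)"
    unfolding Sigma_eq_Sigma_iff Der_shift_eq_iff[OF D D'] .
  also have "\<dots> = conjR (mat 1, m) (Sigma A0 D)"
    using conjR_Sigma[of 1 "(mat 1, m)"] by simp
  finally have "Sigma A0 D' = conjR (mat 1, m) (Sigma A0 D)" .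
  then show "(Sigma A0 D, Sigma A0 D') \<in> orbit_rel A0 d"
    using unipotent_class_in_GR Sigma_in_DefR D D' unfolding orbit_rel_def by blast
qed

end

lemma bij_betw_quotient_image:
  assumes g: "bij_betw g X Y" and r: "r \<subseteq> X \<times> X" and s: "s \<subseteq> Y \<times> Y"
    and compatible: "\<And>x x'. x \<in> X \<Longrightarrow> x' \<in> X \<Longrightarrow> (x, x') \<in> r \<longleftrightarrow> (g x, g x') \<in> s"
  shows "bij_betw (image g) (X // r) (Y // s)"
proof -
  have inj: "inj_on g X" and surj: "g ` X = Y" using g by (auto simp: bij_betw_def)
  have image_class: "g ` (r `` {x}) = s `` {g x}" if x: "x \<in> X" for x
  proof
    show "g ` (r `` {x}) \<subseteq> s `` {g x}" using r compatible x by auto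
    show "s `` {g x} \<subseteq> g ` (r `` {x})"
    proof
      fix y assume "y \<in> s `` {g x}"
      moreover then obtain x' where "x' \<in> X" "y = g x'" using s surj by auto
      ultimately show "y \<in> g ` (r `` {x})" using compatible[OF x] by auto
    qed
  qed
  have "inj_on (image g) (X // r)"
  proof (rule inj_onI)
    fix C C' assume "C \<in> X // r" "C' \<in> X // r" "g ` C = g ` C'"
    moreover have "C \<subseteq> X" "C' \<subseteq> X" using calculation(1,2) r by (auto simp: quotient_def)
    ultimately show "C = C'" using inj by (simp add: inj_on_image_eq_iff)
  qed
  moreover have "image g ` (X // r) = Y // s"
    using image_class surj by (auto simp: quotient_def image_iff)
  ultimately show ?thesis by (simp add: bij_betw_def)
qed

theorem proposition3p8:
  fixes A0 :: "('k::field,'n::finite) kmat set" and d :: nat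
  assumes "k_subalgebra A0" and "k_dim A0 d"
  shows "\<exists>f. bij_betw f (H1 A0) (DefR A0 d // orbit_rel A0 d)"
proof -
  interpret subalgebra_of_dim A0 d using assms by unfold_locales
  have "bij_betw (image (Sigma A0)) (Der A0 // inner_rel A0) (DefR A0 d // orbit_rel A0 d)"
  proof (rule bij_betw_quotient_image[OF bij_betw_Sigma_Der_DefR])
    show "inner_rel A0 \<subseteq> Der A0 \<times> Der A0" by (auto simp: inner_rel_def)
    show "orbit_rel A0 d \<subseteq> DefR A0 d \<times> DefR A0 d" by (auto simp: orbit_rel_def)
    show "(D, D') \<in> inner_rel A0 \<longleftrightarrow> (Sigma A0 D, Sigma A0 D') \<in> orbit_rel A0 d"
      if "D \<in> Der A0" "D' \<in> Der A0" for D D'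
      using orbit_rel_Sigma_iff[OF that] by simp
  qed
  then show ?thesis unfolding H1_def by blast
qed

end
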